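(* Every normal uniform Kan complex $A$ has a normal connection $c:A^{\mathrm{I}}\to A^{\mathrm{I}\times\mathrm{I}}$.
   Context: Let $\mathbb{B}$ be the category of finite sets $[n]=\{\bot,x_1,\dots,x_n,\top\}$ ($n\ge0$, $\bot\ne\top$) and functions preserving $\bot,\top$; cartesian cubical sets are presheaves on $\mathbb{B}^{op}$. $\mathrm{I}^n$ is the representable on $[n]$, $\mathrm{I}^n\cong\mathrm{I}\times\dots\times\mathrm{I}$, $\mathrm{I}=\mathrm{I}^1$, $\mathrm{I}^0=1$; maps $\mathrm{I}^n\to X$ correspond to $n$-cubes of $X$. The two maps $[1]\to[0]$ give endpoints $0,1:1\to\mathrm{I}$. For $1\le i\le n$, $d\in\{0,1\}$, the face $\alpha_i^d:\mathrm{I}^{n-1}\to\mathrm{I}^n$ inserts $d$ in coordinate $i$; for $e\in\{0,1\}$ the open box $\sqcup^n_e\rightarrowtail\mathrm{I}^n$ is the union of the images of all faces $\alpha_i^d$ with $(i,d)\ne(1,e)$, with inclusion $i^n_e$. A uniform Kan complex is a cubical set $A$ with, for each $n\ge1$, $e\in\{0,1\}$, $k\ge1$ and $b:\mathrm{I}^k\times\sqcup^n_e\to A$, a chosen extension $\phi(b):\mathrm{I}^k\times\mathrm{I}^n\to A$ of $b$ along $1\times i^n_e$, with $\phi(b(\alpha\times1))=\phi(b)(\alpha\times1)$ for all $\alpha:\mathrm{I}^j\to\mathrm{I}^k$ ($j\ge1$). It is normal if for all $n\ge0$, $e$, $k\ge1$ and $c:\mathrm{I}^k\times\mathrm{I}^n\to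 A$, with $\pi:\mathrm{I}^{n+1}\to\mathrm{I}^n$ forgetting the first coordinate, $\phi(c(1\times\pi)(1\times i^{n+1}_e))=c(1\times\pi)$. A connection on $X$ is a map of cubical sets $c:X^{\mathrm{I}}\to X^{\mathrm{I}\times\mathrm{I}}$ such that for every $n$-cube $a:\mathrm{I}^n\times\mathrm{I}\to X$ of $X^{\mathrm{I}}$, with $a_0=a(1\times0)$, the map $c(a):\mathrm{I}^n\times\mathrm{I}\times\mathrm{I}\to X$ (coordinates $(u,s,t)$) restricts on $s=1$ to $a$ and on $s=0$ and on $t=0$ to the constant path at $a_0$. It is normal if $c(x\circ\mathrm{pr})=x\circ\mathrm{pr}'$ for every $n$-cube $x:\mathrm{I}^n\to X$, where $\mathrm{pr}:\mathrm{I}^n\times\mathrm{I}\to\mathrm{I}^n$ and $\mathrm{pr}':\mathrm{I}^n\times\mathrm{I}\times\mathrm{I}\to\mathrm{I}^n$ are projections (i.e. $c$ sends constant paths to doubly degenerate squares). *)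

theory Defs
  imports Main
begin

text \<open>An element of [m] = {bot, x_1, ..., x_m, top}: Bot, Top, or V j standing for x_(j+1), j < m.\<close>
datatype pt = Bot | Top | V nat

definition valid_pt :: "nat \<Rightarrow> pt \<Rightarrow> bool" where
  "valid_pt m p \<longleftrightarrow> (case p of V j \<Rightarrow> j < m | _ \<Rightarrow> True)"

text \<open>A morphism [n] -> [m] of B (preserving bot, top) is determined by the images of
  x_1..x_n: a list of length n of points of [m].\<close>
definition hom :: "nat \<Rightarrow> nat \<Rightarrow> pt list set" where
  "hom n m = {f. length f = n \<and> (\<forall>p\<in>set f. valid_pt m p)}"

fun app :: "pt list \<Rightarrow> pt \<Rightarrow> pt" where
  "app g Bot = Bot"
| "app g Top = Top"
| "app g (V i) = g ! i"

definition comp :: "pt list \<Rightarrow> pt list \<Rightarrow> pt list" where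
  "comp g f = map (app g) f"

definition idm :: "nat \<Rightarrow> pt list" where
  "idm n = map V [0..<n]"

text \<open>endpoints: False = 0 = bot, True = 1 = top\<close>
definition ep :: "bool \<Rightarrow> pt" where
  "ep d = (if d then Top else Bot)"

text \<open>The B-morphism [n] -> [n-1] inducing the face alpha_i^d : I^(n-1) -> I^n
  (x_i goes to d, the other generators go in order to x_1..x_(n-1)).\<close>
definition face :: "nat \<Rightarrow> nat \<Rightarrow> bool \<Rightarrow> pt list" where
  "face n i d = map (\<lambda>j. if j + 1 < i then V j else if j + 1 = i then ep d else V (j - 1)) [0..<n]"

section \<open>Cartesian cubical sets (covariant functors B -> Set)\<close>

record 'a cset =
  cells :: "nat \<Rightarrow> 'a set"
  act :: "nat \<Rightarrow> pt list \<Rightarrow> 'a \<Rightarrow> 'a"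
  \<comment> \<open>act X m f x: the action of f : [n] -> [m] (n = length f) on an n-cell x\<close>

definition is_cset :: "'a cset \<Rightarrow> bool" where
  "is_cset X \<longleftrightarrow>
     (\<forall>n m f x. f \<in> hom n m \<and> x \<in> cells X n \<longrightarrow> act X m f x \<in> cells X m) \<and>
     (\<forall>n x. x \<in> cells X n \<longrightarrow> act X n (idm n) x = x) \<and>
     (\<forall>n m k f g x. f \<in> hom n m \<and> g \<in> hom m k \<and> x \<in> cells X n \<longrightarrow>
        act X k (comp g f) x = act X k g (act X m f x))"

definition is_cmap :: "'a cset \<Rightarrow> 'b cset \<Rightarrow> (nat \<Rightarrow> 'a \<Rightarrow> 'b) \<Rightarrow> bool" where
  "is_cmap X Y \<alpha> \<longleftrightarrow>
     (\<forall>n x. x \<in> cells X n \<longrightarrow> \<alpha> n x \<in> cells Y n) \<and>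
     (\<forall>n m f x. f \<in> hom n m \<and> x \<in> cells X n \<longrightarrow> \<alpha> m (act X m f x) = act Y m f (\<alpha> n x))"

text \<open>the representable I^k = Hom_B([k], -)\<close>
definition rep :: "nat \<Rightarrow> pt list cset" where
  "rep k = \<lparr>cells = (\<lambda>m. hom k m), act = (\<lambda>m f g. comp f g)\<rparr>"

text \<open>products I^(k_1) x ... x I^(k_r) of representables: tuples of morphisms\<close>
definition prod_rep :: "nat list \<Rightarrow> nat \<Rightarrow> pt list list set" where
  "prod_rep ks m = {gs. length gs = length ks \<and> (\<forall>i<length ks. gs ! i \<in> hom (ks ! i) m)}"

text \<open>maps S -> X, where S is the subobject of a product of representables given by
  the predicate S; represented extensionally (undefined outside S).\<close>
definition is_pmap :: "'a cset \<Rightarrow> nat list \<Rightarrow> (nat \<Rightarrow> pt list list \<Rightarrow> bool)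
                      \<Rightarrow> (nat \<Rightarrow> pt list list \<Rightarrow> 'a) \<Rightarrow> bool" where
  "is_pmap X ks S b \<longleftrightarrow>
     (\<forall>m gs. gs \<in> prod_rep ks m \<and> S m gs \<longrightarrow> b m gs \<in> cells X m) \<and>
     (\<forall>m m' f gs. gs \<in> prod_rep ks m \<and> S m gs \<and> f \<in> hom m m' \<longrightarrow>
        b m' (map (comp f) gs) = act X m' f (b m gs)) \<and>
     (\<forall>m gs. \<not> (gs \<in> prod_rep ks m \<and> S m gs) \<longrightarrow> b m gs = undefined)"

definition restr :: "nat list \<Rightarrow> (nat \<Rightarrow> pt list list \<Rightarrow> bool)
                     \<Rightarrow> (nat \<Rightarrow> pt list list \<Rightarrow> 'a) \<Rightarrow> (nat \<Rightarrow> pt list list \<Rightarrow> 'a)" where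
  "restr ks S b = (\<lambda>m gs. if gs \<in> prod_rep ks m \<and> S m gs then b m gs else undefined)"

definition allp :: "nat \<Rightarrow> pt list list \<Rightarrow> bool" where
  "allp m gs = True"

text \<open>exponential X^Y for Y = I^(k_1) x ... x I^(k_r): (X^Y)_n = Hom(I^n x Y, X)\<close>
definition exp_cset :: "'a cset \<Rightarrow> nat list \<Rightarrow> (nat \<Rightarrow> pt list list \<Rightarrow> 'a) cset" where
  "exp_cset X ks = \<lparr>cells = (\<lambda>n. {a. is_pmap X (n # ks) allp a}),
     act = (\<lambda>m f a. restr (m # ks) allp (\<lambda>m' gs. a m' (comp (hd gs) f # tl gs)))\<rparr>"

text \<open>I^k x (open box of dimension n, missing face (1,e)), as subobject of I^k x I^n:
  the second component lies in the union of the images of the faces alpha_i^d.\<close>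
definition box :: "nat \<Rightarrow> bool \<Rightarrow> nat \<Rightarrow> pt list list \<Rightarrow> bool" where
  "box n e m gs \<longleftrightarrow> (\<exists>i d. 1 \<le> i \<and> i \<le> n \<and> (i, d) \<noteq> (1, e) \<and>
      (\<exists>h' \<in> hom (n - 1) m. gs ! 1 = comp h' (face n i d)))"

definition uniform_kan :: "'a cset \<Rightarrow>
   (nat \<Rightarrow> bool \<Rightarrow> nat \<Rightarrow> (nat \<Rightarrow> pt list list \<Rightarrow> 'a) \<Rightarrow> (nat \<Rightarrow> pt list list \<Rightarrow> 'a)) \<Rightarrow> bool" where
  "uniform_kan X \<phi> \<longleftrightarrow>
    (\<forall>n e k b. 1 \<le> n \<and> 1 \<le> k \<and> is_pmap X [k, n] (box n e) b \<longrightarrow>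
       is_pmap X [k, n] allp (\<phi> n e k b) \<and>
       (\<forall>m gs. gs \<in> prod_rep [k, n] m \<and> box n e m gs \<longrightarrow> \<phi> n e k b m gs = b m gs) \<and>
       (\<forall>j \<alpha>. 1 \<le> j \<and> is_cmap (rep j) (rep k) \<alpha> \<longrightarrow>
          \<phi> n e j (restr [j, n] (box n e) (\<lambda>m gs. b m [\<alpha> m (gs ! 0), gs ! 1]))
          = restr [j, n] allp (\<lambda>m gs. \<phi> n e k b m [\<alpha> m (gs ! 0), gs ! 1])))"

text \<open>normality; the projection I^(n+1) -> I^n forgetting the first coordinate is tl\<close>
definition normal_kan :: "'a cset \<Rightarrow>
   (nat \<Rightarrow> bool \<Rightarrow> nat \<Rightarrow> (nat \<Rightarrow> pt list list \<Rightarrow> 'a) \<Rightarrow> (nat \<Rightarrow> pt list list \<Rightarrow> 'a)) \<Rightarrow> bool" where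
  "normal_kan X \<phi> \<longleftrightarrow>
    (\<forall>n e k c. 1 \<le> k \<and> is_pmap X [k, n] allp c \<longrightarrow>
       \<phi> (n + 1) e k (restr [k, n + 1] (box (n + 1) e) (\<lambda>m gs. c m [gs ! 0, tl (gs ! 1)]))
       = restr [k, n + 1] allp (\<lambda>m gs. c m [gs ! 0, tl (gs ! 1)]))"

definition normal_uniform_kan :: "'a cset \<Rightarrow> bool" where
  "normal_uniform_kan X \<longleftrightarrow> is_cset X \<and> (\<exists>\<phi>. uniform_kan X \<phi> \<and> normal_kan X \<phi>)"

text \<open>c : X^I -> X^(I x I); cells of X^(I x I) at n are maps on tuples (u, s, t).\<close>
definition is_connection :: "'a cset \<Rightarrow>
   (nat \<Rightarrow> (nat \<Rightarrow> pt list list \<Rightarrow> 'a) \<Rightarrow> (nat \<Rightarrow> pt list list \<Rightarrow> 'a)) \<Rightarrow> bool" where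
  "is_connection X c \<longleftrightarrow>
     is_cmap (exp_cset X [1]) (exp_cset X [1, 1]) c \<and>
     (\<forall>n a. a \<in> cells (exp_cset X [1]) n \<longrightarrow>
        (\<forall>m h s t. h \<in> hom n m \<and> s \<in> hom 1 m \<and> t \<in> hom 1 m \<longrightarrow>
           c n a m [h, [Top], t] = a m [h, t] \<and>
           c n a m [h, [Bot], t] = a m [h, [Bot]] \<and>
           c n a m [h, s, [Bot]] = a m [h, [Bot]]))"

definition normal_connection :: "'a cset \<Rightarrow>
   (nat \<Rightarrow> (nat \<Rightarrow> pt list list \<Rightarrow> 'a) \<Rightarrow> (nat \<Rightarrow> pt list list \<Rightarrow> 'a)) \<Rightarrow> bool" where
  "normal_connection X c \<longleftrightarrow>
     (\<forall>n x. is_pmap X [n] allp x \<longrightarrow>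
        c n (restr [n, 1] allp (\<lambda>m gs. x m [hd gs]))
        = restr [n, 1, 1] allp (\<lambda>m gs. x m [hd gs]))"

end

theory Submission
  imports Defs
begin

text \<open>A connection is obtained from a single Kan filling. For a path \<open>a\<close> over the cube \<open>u\<close>,
  take the 2-dimensional open box in coordinates \<open>(t, s)\<close> missing the face \<open>t = 1\<close>, carrying
  the constant path at \<open>a(u, 0)\<close> on the faces \<open>t = 0\<close> and \<open>s = 0\<close> and the path \<open>a(u, t)\<close> on the
  face \<open>s = 1\<close>; its filler, read at \<open>(u, s, t)\<close>, is \<open>c(a)\<close>. The defining boundary conditions
  of a connection are the faces of this box, uniformity of the filling in the parameter \<open>u\<close>
  makes \<open>c\<close> natural, and for a constant path the box is degenerate in \<open>t\<close>, so normality of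
  the filling makes \<open>c(a)\<close> doubly degenerate. Fillings are only provided over parameter cubes
  of positive dimension, so \<open>u\<close> is padded with a dummy coordinate fixed at \<open>0\<close>.\<close>

lemma valid_pt_simps [simp]: "valid_pt m Bot" "valid_pt m Top" "valid_pt m (V j) \<longleftrightarrow> j < m"
  by (auto simp: valid_pt_def)

lemma hom_iff: "f \<in> hom n m \<longleftrightarrow> length f = n \<and> (\<forall>p\<in>set f. valid_pt m p)"
  by (simp add: hom_def)

lemma Cons_hom [simp]: "p # q \<in> hom n m \<longleftrightarrow> (\<exists>n'. n = Suc n' \<and> valid_pt m p \<and> q \<in> hom n' m)"
  by (auto simp: hom_def)

lemma hom_0 [simp]: "f \<in> hom 0 m \<longleftrightarrow> f = []"
  by (auto simp: hom_def)

lemma hom_Suc: "f \<in> hom (Suc n) m \<longleftrightarrow> (\<exists>p q. f = p # q \<and> valid_pt m p \<and> q \<in> hom n m)"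
  by (auto simp: hom_def length_Suc_conv)

lemma hom_1 [simp]: "f \<in> hom (Suc 0) m \<longleftrightarrow> (\<exists>p. f = [p] \<and> valid_pt m p)"
  by (auto simp: hom_Suc)

lemma hom_2 [simp]: "f \<in> hom 2 m \<longleftrightarrow> (\<exists>p q. f = [p, q] \<and> valid_pt m p \<and> valid_pt m q)"
  by (auto simp: hom_Suc numeral_2_eq_2)

lemma valid_pt_app: "f \<in> hom n m \<Longrightarrow> valid_pt n p \<Longrightarrow> valid_pt m (app f p)"
  by (cases p) (auto simp: hom_def valid_pt_def)

lemma comp_hom: "f \<in> hom n m \<Longrightarrow> g \<in> hom m k \<Longrightarrow> comp g f \<in> hom n k"
  by (auto simp: comp_def hom_iff intro: valid_pt_app[of g m k])

lemma comp_assoc: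
  assumes "f \<in> hom n (length g)"
  shows "comp h (comp g f) = comp (comp h g) f"
proof -
  have "app (comp h g) p = app h (app g p)" if "valid_pt (length g) p" for p
    using that by (cases p) (auto simp: comp_def valid_pt_def)
  with assms show ?thesis
    by (auto simp: comp_def hom_iff)
qed

lemma prod_rep_Nil [simp]: "gs \<in> prod_rep [] m \<longleftrightarrow> gs = []"
  by (simp add: prod_rep_def)

lemma prod_rep_Cons [simp]:
  "gs \<in> prod_rep (k # ks) m \<longleftrightarrow> (\<exists>g gs'. gs = g # gs' \<and> g \<in> hom k m \<and> gs' \<in> prod_rep ks m)"
  by (auto simp: prod_rep_def length_Suc_conv nth_Cons split: nat.splits)

lemma prod_rep_map_comp: "gs \<in> prod_rep ks m \<Longrightarrow> f \<in> hom m m' \<Longrightarrow> map (comp f) gs \<in> prod_rep ks m'"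
  by (auto simp: prod_rep_def intro: comp_hom)

lemma pmap_cells: "is_pmap X ks S b \<Longrightarrow> gs \<in> prod_rep ks m \<Longrightarrow> S m gs \<Longrightarrow> b m gs \<in> cells X m"
  unfolding is_pmap_def by blast

lemma pmap_natural:
  "is_pmap X ks S b \<Longrightarrow> gs \<in> prod_rep ks m \<Longrightarrow> S m gs \<Longrightarrow> f \<in> hom m m' \<Longrightarrow>
   b m' (map (comp f) gs) = act X m' f (b m gs)"
  unfolding is_pmap_def by blast

lemma restr_in: "gs \<in> prod_rep ks m \<Longrightarrow> S m gs \<Longrightarrow> restr ks S b m gs = b m gs"
  by (simp add: restr_def)

lemma restr_out: "\<not> (gs \<in> prod_rep ks m \<and> S m gs) \<Longrightarrow> restr ks S b m gs = undefined"
  unfolding restr_def by (rule if_not_P)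

lemma restr_cong:
  "(\<And>m gs. gs \<in> prod_rep ks m \<Longrightarrow> S m gs \<Longrightarrow> b m gs = c m gs) \<Longrightarrow> restr ks S b = restr ks S c"
  by (auto simp: restr_def fun_eq_iff)

lemma is_pmap_restr_precomp:
  assumes x: "is_pmap X ks' S' x"
    and S_map: "\<And>m m' f gs. gs \<in> prod_rep ks m \<Longrightarrow> S m gs \<Longrightarrow> f \<in> hom m m' \<Longrightarrow>
        S m' (map (comp f) gs)"
    and G_dom: "\<And>m gs. gs \<in> prod_rep ks m \<Longrightarrow> S m gs \<Longrightarrow> G gs \<in> prod_rep ks' m \<and> S' m (G gs)"
    and G_map: "\<And>m m' f gs. gs \<in> prod_rep ks m \<Longrightarrow> S m gs \<Longrightarrow> f \<in> hom m m' \<Longrightarrow>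
        G (map (comp f) gs) = map (comp f) (G gs)"
  shows "is_pmap X ks S (restr ks S (\<lambda>m gs. x m (G gs)))"
  unfolding is_pmap_def
proof (intro conjI allI impI)
  fix m gs assume "gs \<in> prod_rep ks m \<and> S m gs"
  then show "restr ks S (\<lambda>m gs. x m (G gs)) m gs \<in> cells X m"
    using G_dom pmap_cells[OF x] by (simp add: restr_in)
next
  fix m m' f gs assume gs: "gs \<in> prod_rep ks m \<and> S m gs \<and> f \<in> hom m m'"
  then have "map (comp f) gs \<in> prod_rep ks m'" "S m' (map (comp f) gs)"
    using prod_rep_map_comp S_map by blast+
  then have "restr ks S (\<lambda>m gs. x m (G gs)) m' (map (comp f) gs) = x m' (G (map (comp f) gs))"
    by (rule restr_in)
  also have "\<dots> = x m' (map (comp f) (G gs))"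
    using gs by (auto simp: G_map)
  also have "\<dots> = act X m' f (x m (G gs))"
    using pmap_natural[OF x] G_dom gs by blast
  also have "\<dots> = act X m' f (restr ks S (\<lambda>m gs. x m (G gs)) m gs)"
    using gs by (simp add: restr_in)
  finally show "restr ks S (\<lambda>m gs. x m (G gs)) m' (map (comp f) gs)
      = act X m' f (restr ks S (\<lambda>m gs. x m (G gs)) m gs)" .
next
  fix m gs assume "\<not> (gs \<in> prod_rep ks m \<and> S m gs)"
  then show "restr ks S (\<lambda>m gs. x m (G gs)) m gs = undefined"
    by (rule restr_out)
qed

lemma exp_cset_cells [simp]: "a \<in> cells (exp_cset X ks) n \<longleftrightarrow> is_pmap X (n # ks) allp a"
  by (simp add: exp_cset_def)

lemma exp_cset_act: "act (exp_cset X ks) m f a = restr (m # ks) allp (\<lambda>m' gs. a m' (comp (hd gs) f # tl gs))"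
  by (simp add: exp_cset_def)

lemma is_cmap_rep_precomp:
  assumes F: "F \<in> hom k l"
  shows "is_cmap (rep l) (rep k) (\<lambda>_ g. comp g F)"
  unfolding is_cmap_def rep_def
proof (simp, intro conjI allI impI)
  fix m g assume "g \<in> hom l m"
  then show "comp g F \<in> hom k m" using comp_hom[OF F] by blast
next
  fix m m' f g assume "f \<in> hom m m' \<and> g \<in> hom l m"
  then have "F \<in> hom k (length g)" using F by (simp add: hom_iff)
  then show "comp (comp f g) F = comp f (comp g F)" by (simp add: comp_assoc)
qed

lemma face_hom: "1 \<le> i \<Longrightarrow> i \<le> n \<Longrightarrow> face n i d \<in> hom n (n - 1)"
  by (auto simp: face_def hom_iff ep_def)

lemma box_map_comp:
  assumes gs: "gs \<in> prod_rep [k, n] m" and box: "box n e m gs" and f: "f \<in> hom m m'"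
  shows "box n e m' (map (comp f) gs)"
proof -
  obtain i d h' where i: "1 \<le> i" "i \<le> n" "(i, d) \<noteq> (1, e)" and h': "h' \<in> hom (n - 1) m"
    and eq: "gs ! 1 = comp h' (face n i d)"
    using box unfolding box_def by blast
  have "face n i d \<in> hom n (length h')"
    using face_hom[OF i(1,2)] h' by (simp add: hom_iff)
  then have "map (comp f) gs ! 1 = comp (comp f h') (face n i d)"
    using gs eq by (auto simp: comp_assoc)
  moreover have "comp f h' \<in> hom (n - 1) m'"
    using comp_hom[OF h' f] .
  ultimately show ?thesis
    unfolding box_def using i by blast
qed

lemma box_2_True:
  assumes "valid_pt m t" "valid_pt m s"
  shows "box 2 True m [g, [t, s]] \<longleftrightarrow> t = Bot \<or> s = Bot \<or> s = Top"
proof -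
  have faces: "face 2 1 d = [ep d, V 0]" "face 2 (Suc 0) d = [ep d, V 0]" "face 2 2 d = [V 0, ep d]"
    for d by (simp_all add: face_def upt_rec)
  show ?thesis
  proof
    assume "box 2 True m [g, [t, s]]"
    then obtain i d h' where i: "1 \<le> i" "i \<le> 2" "(i, d) \<noteq> (1, True)" "h' \<in> hom 1 m"
      and eq: "[t, s] = comp h' (face 2 i d)"
      unfolding box_def by (simp del: hom_1) blast
    from i have "i = 1 \<or> i = 2" by auto
    then show "t = Bot \<or> s = Bot \<or> s = Top"
      using eq i by (auto simp: faces comp_def ep_def split: if_splits)
  next
    assume "t = Bot \<or> s = Bot \<or> s = Top"
    then consider "t = Bot" | d where "s = ep d"
      unfolding ep_def by (metis (full_types))
    then show "box 2 True m [g, [t, s]]"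
    proof cases
      case 1
      then show ?thesis
        unfolding box_def using assms
        by (intro exI[of _ 1] exI[of _ False]) (auto simp: faces comp_def ep_def intro!: bexI[of _ "[s]"])
    next
      case 2
      then show ?thesis
        unfolding box_def using assms
        by (intro exI[of _ 2] exI[of _ d]) (auto simp: faces comp_def ep_def intro!: bexI[of _ "[t]"])
    qed
  qed
qed

lemma uniform_kanD:
  assumes "uniform_kan X \<phi>" "1 \<le> n" "1 \<le> k" "is_pmap X [k, n] (box n e) b"
  shows "is_pmap X [k, n] allp (\<phi> n e k b)"
    and "gs \<in> prod_rep [k, n] m \<Longrightarrow> box n e m gs \<Longrightarrow> \<phi> n e k b m gs = b m gs"
    and "1 \<le> j \<Longrightarrow> is_cmap (rep j) (rep k) \<alpha> \<Longrightarrow>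
      \<phi> n e j (restr [j, n] (box n e) (\<lambda>m gs. b m [\<alpha> m (gs ! 0), gs ! 1]))
      = restr [j, n] allp (\<lambda>m gs. \<phi> n e k b m [\<alpha> m (gs ! 0), gs ! 1])"
  using assms unfolding uniform_kan_def by blast+

definition shift_pt :: "pt \<Rightarrow> pt" where
  "shift_pt p = (case p of V i \<Rightarrow> V (Suc i) | q \<Rightarrow> q)"

definition pad_hom :: "pt list \<Rightarrow> pt list" where
  "pad_hom f = Bot # map shift_pt f"

lemma pad_hom_hom: "f \<in> hom n m \<Longrightarrow> pad_hom f \<in> hom (Suc n) (Suc m)"
  by (auto simp: pad_hom_def hom_iff shift_pt_def valid_pt_def split: pt.splits)

lemma comp_Cons_pad_hom: "comp (p # q) (pad_hom f) = Bot # comp q f"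
  by (auto simp: pad_hom_def comp_def shift_pt_def split: pt.splits)

text \<open>Here \<open>gs ! 0\<close> is the padded parameter \<open>(0, u)\<close> and \<open>gs ! 1 = [t, s]\<close>.\<close>

definition conn_box :: "nat \<Rightarrow> (nat \<Rightarrow> pt list list \<Rightarrow> 'a) \<Rightarrow> nat \<Rightarrow> pt list list \<Rightarrow> 'a" where
  "conn_box n a = restr [Suc n, 2] (box 2 True)
     (\<lambda>m gs. a m [tl (gs ! 0), [if gs ! 1 ! 1 = Top then gs ! 1 ! 0 else Bot]])"

definition conn :: "(nat \<Rightarrow> bool \<Rightarrow> nat \<Rightarrow> (nat \<Rightarrow> pt list list \<Rightarrow> 'a) \<Rightarrow> nat \<Rightarrow> pt list list \<Rightarrow> 'a)
    \<Rightarrow> nat \<Rightarrow> (nat \<Rightarrow> pt list list \<Rightarrow> 'a) \<Rightarrow> nat \<Rightarrow> pt list list \<Rightarrow> 'a" where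
  "conn \<phi> n a = restr [n, 1, 1] allp
     (\<lambda>m gs. \<phi> 2 True (Suc n) (conn_box n a) m [Bot # gs ! 0, [gs ! 2 ! 0, gs ! 1 ! 0]])"

lemma conn_box_eq:
  assumes "g \<in> hom (Suc n) m" "valid_pt m t" "valid_pt m s" "t = Bot \<or> s = Bot \<or> s = Top"
  shows "conn_box n a m [g, [t, s]] = a m [tl g, [if s = Top then t else Bot]]"
  using assms box_2_True[of m t s g] by (simp add: conn_box_def restr_in)

lemma conn_eq:
  "h \<in> hom n m \<Longrightarrow> valid_pt m s \<Longrightarrow> valid_pt m t \<Longrightarrow>
   conn \<phi> n a m [h, [s], [t]] = \<phi> 2 True (Suc n) (conn_box n a) m [Bot # h, [t, s]]"
  by (simp add: conn_def restr_in allp_def)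

lemma conn_box_pmap:
  assumes "is_pmap A [n, 1] allp a"
  shows "is_pmap A [Suc n, 2] (box 2 True) (conn_box n a)"
  unfolding conn_box_def
proof (rule is_pmap_restr_precomp[OF assms])
  fix m m' f gs
  assume gs: "gs \<in> prod_rep [Suc n, 2] m" "box 2 True m gs" and f: "f \<in> hom m m'"
  then show "box 2 True m' (map (comp f) gs)"
    by (rule box_map_comp)
  from gs(1) obtain g t s where gs': "gs = [g, [t, s]]" "g \<in> hom (Suc n) m" "valid_pt m t" "valid_pt m s"
    by auto
  with gs(2) have "t = Bot \<or> s = Bot \<or> s = Top"
    using box_2_True by blast
  with gs' show "[tl (map (comp f) gs ! 0),
        [if map (comp f) gs ! 1 ! 1 = Top then map (comp f) gs ! 1 ! 0 else Bot]]
      = map (comp f) [tl (gs ! 0), [if gs ! 1 ! 1 = Top then gs ! 1 ! 0 else Bot]]"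
    by (auto simp: comp_def map_tl)
next
  fix m gs assume "gs \<in> prod_rep [Suc n, 2] m" "box 2 True m gs"
  then show "[tl (gs ! 0), [if gs ! 1 ! 1 = Top then gs ! 1 ! 0 else Bot]] \<in> prod_rep [n, 1] m \<and>
      allp m [tl (gs ! 0), [if gs ! 1 ! 1 = Top then gs ! 1 ! 0 else Bot]]"
    by (auto simp: allp_def hom_Suc)
qed

lemma conn_box_reindex:
  assumes f: "f \<in> hom n m"
  shows "conn_box m (act (exp_cset X [1]) m f a)
    = restr [Suc m, 2] (box 2 True) (\<lambda>m' gs. conn_box n a m' [comp (gs ! 0) (pad_hom f), gs ! 1])"
  unfolding conn_box_def[of m]
proof (rule restr_cong)
  fix m' gs assume gs: "gs \<in> prod_rep [Suc m, 2] m'" "box 2 True m' gs"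
  then obtain p q t s where "gs = [p # q, [t, s]]" "valid_pt m' p" "q \<in> hom m m'"
      "valid_pt m' t" "valid_pt m' s"
    by (auto simp: hom_Suc)
  moreover from this gs(2) have "t = Bot \<or> s = Bot \<or> s = Top"
    using box_2_True by blast
  moreover have "comp (p # q) (pad_hom f) \<in> hom (Suc n) m'"
    using comp_hom[OF pad_hom_hom[OF f]] calculation by simp
  ultimately show "act (exp_cset X [1]) m f a m' [tl (gs ! 0), [if gs ! 1 ! 1 = Top then gs ! 1 ! 0 else Bot]]
      = conn_box n a m' [comp (gs ! 0) (pad_hom f), gs ! 1]"
    by (simp add: conn_box_eq exp_cset_act restr_in allp_def comp_Cons_pad_hom)
qed

context
  fixes A :: "'a cset" and \<phi>
  assumes uk: "uniform_kan A \<phi>"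
begin

lemma conn_filler_pmap:
  "is_pmap A [n, 1] allp a \<Longrightarrow> is_pmap A [Suc n, 2] allp (\<phi> 2 True (Suc n) (conn_box n a))"
  using uniform_kanD(1)[OF uk _ _ conn_box_pmap] by simp

lemma conn_pmap:
  assumes "is_pmap A [n, 1] allp a"
  shows "is_pmap A [n, 1, 1] allp (conn \<phi> n a)"
  unfolding conn_def
  by (rule is_pmap_restr_precomp[OF conn_filler_pmap[OF assms], where G = "\<lambda>gs. [Bot # gs ! 0, [gs ! 2 ! 0, gs ! 1 ! 0]]"])
    (auto simp: allp_def comp_def)

lemma conn_boundary:
  assumes a: "is_pmap A [n, 1] allp a" and h: "h \<in> hom n m" and st: "s \<in> hom 1 m" "t \<in> hom 1 m"
  shows "conn \<phi> n a m [h, [Top], t] = a m [h, t]"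
    and "conn \<phi> n a m [h, [Bot], t] = a m [h, [Bot]]"
    and "conn \<phi> n a m [h, s, [Bot]] = a m [h, [Bot]]"
proof -
  have box_value: "conn \<phi> n a m [h, [y], [x]] = a m [h, [if y = Top then x else Bot]]"
    if x: "valid_pt m x" and y: "valid_pt m y" and xy: "x = Bot \<or> y = Bot \<or> y = Top" for x y
  proof -
    have "[Bot # h, [x, y]] \<in> prod_rep [Suc n, 2] m" "box 2 True m [Bot # h, [x, y]]"
      using h x y xy box_2_True by auto
    have "conn \<phi> n a m [h, [y], [x]] = \<phi> 2 True (Suc n) (conn_box n a) m [Bot # h, [x, y]]"
      by (rule conn_eq[OF h y x])
    also have "\<dots> = conn_box n a m [Bot # h, [x, y]]"
      using uniform_kanD(2)[OF uk _ _ conn_box_pmap[OF a]] \<open>box 2 True m [Bot # h, [x, y]]\<close>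
        \<open>[Bot # h, [x, y]] \<in> prod_rep [Suc n, 2] m\<close> by simp
    also have "\<dots> = a m [h, [if y = Top then x else Bot]]"
      using conn_box_eq[of "Bot # h" n m x y a] h x y xy by simp
    finally show ?thesis .
  qed
  obtain s' t' where "s = [s']" "t = [t']" "valid_pt m s'" "valid_pt m t'"
    using st by auto
  then show "conn \<phi> n a m [h, [Top], t] = a m [h, t]"
    and "conn \<phi> n a m [h, [Bot], t] = a m [h, [Bot]]"
    and "conn \<phi> n a m [h, s, [Bot]] = a m [h, [Bot]]"
    using box_value[of t' Top] box_value[of t' Bot] box_value[of Bot s'] by simp_all
qed

lemma conn_natural:
  assumes a: "is_pmap A [n, 1] allp a" and f: "f \<in> hom n m"
  shows "conn \<phi> m (act (exp_cset A [1]) m f a) = act (exp_cset A [1, 1]) m f (conn \<phi> n a)"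
proof -
  have filler: "\<phi> 2 True (Suc m) (conn_box m (act (exp_cset A [1]) m f a))
    = restr [Suc m, 2] allp (\<lambda>m' gs. \<phi> 2 True (Suc n) (conn_box n a) m' [comp (gs ! 0) (pad_hom f), gs ! 1])"
    unfolding conn_box_reindex[OF f]
    using uniform_kanD(3)[OF uk _ _ conn_box_pmap[OF a] _ is_cmap_rep_precomp[OF pad_hom_hom[OF f]]]
    by simp
  show ?thesis
    unfolding conn_def[of \<phi> m] exp_cset_act[of A "[1, 1]"]
  proof (rule restr_cong)
    fix m' gs assume "gs \<in> prod_rep [m, 1, 1] m'"
    then obtain h s t where gs: "gs = [h, [s], [t]]" "h \<in> hom m m'" "valid_pt m' s" "valid_pt m' t"
      by auto
    have "[Bot # h, [t, s]] \<in> prod_rep [Suc m, 2] m'"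
      using gs by simp
    then have "\<phi> 2 True (Suc m) (conn_box m (act (exp_cset A [1]) m f a)) m' [Bot # h, [t, s]]
        = \<phi> 2 True (Suc n) (conn_box n a) m' [Bot # comp h f, [t, s]]"
      unfolding filler by (simp add: restr_in allp_def comp_Cons_pad_hom)
    also have "\<dots> = conn \<phi> n a m' [comp h f, [s], [t]]"
      using conn_eq[OF comp_hom[OF f gs(2)] gs(3,4), of \<phi> a] by simp
    finally show "\<phi> 2 True (Suc m) (conn_box m (act (exp_cset A [1]) m f a)) m'
          [Bot # gs ! 0, [gs ! 2 ! 0, gs ! 1 ! 0]]
        = conn \<phi> n a m' (comp (hd gs) f # tl gs)"
      using gs(1) by simp
  qed
qed

lemma is_connection_conn: "is_connection A (conn \<phi>)"
  unfolding is_connection_def is_cmap_def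
proof (intro conjI allI impI)
  fix n a assume "a \<in> cells (exp_cset A [1]) n"
  then show "conn \<phi> n a \<in> cells (exp_cset A [1, 1]) n"
    using conn_pmap by simp
next
  fix n m f a assume "f \<in> hom n m \<and> a \<in> cells (exp_cset A [1]) n"
  then show "conn \<phi> m (act (exp_cset A [1]) m f a) = act (exp_cset A [1, 1]) m f (conn \<phi> n a)"
    using conn_natural by simp
next
  fix n a m h s t
  assume "a \<in> cells (exp_cset A [1]) n" and hst: "h \<in> hom n m \<and> s \<in> hom 1 m \<and> t \<in> hom 1 m"
  then have a: "is_pmap A [n, 1] allp a"
    by simp
  show "conn \<phi> n a m [h, [Top], t] = a m [h, t]"
    using conn_boundary(1)[OF a] hst by blast
  show "conn \<phi> n a m [h, [Bot], t] = a m [h, [Bot]]"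
    using conn_boundary(2)[OF a] hst by blast
  show "conn \<phi> n a m [h, s, [Bot]] = a m [h, [Bot]]"
    using conn_boundary(3)[OF a] hst by blast
qed

lemma normal_connection_conn:
  assumes nk: "normal_kan A \<phi>"
  shows "normal_connection A (conn \<phi>)"
  unfolding normal_connection_def
proof (intro allI impI)
  fix n x assume x: "is_pmap A [n] allp x"
  define a where "a = restr [n, 1] allp (\<lambda>m gs. x m [hd gs])"
  define c where "c = restr [Suc n, 1] allp (\<lambda>m gs. x m [tl (gs ! 0)])"
  have c_pmap: "is_pmap A [Suc n, 1] allp c"
    unfolding c_def
    by (rule is_pmap_restr_precomp[OF x, where G = "\<lambda>gs. [tl (gs ! 0)]"])
      (auto simp: allp_def comp_def hom_Suc map_tl)
  have "conn_box n a = restr [Suc n, 2] (box 2 True) (\<lambda>m gs. c m [gs ! 0, tl (gs ! 1)])"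
    unfolding conn_box_def
  proof (rule restr_cong)
    fix m gs assume "gs \<in> prod_rep [Suc n, 2] m" "box 2 True m gs"
    then obtain p q t s where "gs = [p # q, [t, s]]" "valid_pt m p" "q \<in> hom n m"
        "valid_pt m t" "valid_pt m s"
      by (auto simp: hom_Suc)
    then show "a m [tl (gs ! 0), [if gs ! 1 ! 1 = Top then gs ! 1 ! 0 else Bot]] = c m [gs ! 0, tl (gs ! 1)]"
      by (simp add: a_def c_def restr_in allp_def)
  qed
  then have filler: "\<phi> 2 True (Suc n) (conn_box n a) = restr [Suc n, 2] allp (\<lambda>m gs. c m [gs ! 0, tl (gs ! 1)])"
    using nk[unfolded normal_kan_def, rule_format, of "Suc n" 1 c True] c_pmap
    by (simp add: numeral_2_eq_2)
  show "conn \<phi> n (restr [n, 1] allp (\<lambda>m gs. x m [hd gs])) = restr [n, 1, 1] allp (\<lambda>m gs. x m [hd gs])"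
    unfolding a_def[symmetric] conn_def
  proof (rule restr_cong)
    fix m gs assume "gs \<in> prod_rep [n, 1, 1] m" "allp m gs"
    then obtain h s t where "gs = [h, [s], [t]]" "h \<in> hom n m" "valid_pt m s" "valid_pt m t"
      by auto
    then show "\<phi> 2 True (Suc n) (conn_box n a) m [Bot # gs ! 0, [gs ! 2 ! 0, gs ! 1 ! 0]] = x m [hd gs]"
      by (simp add: filler c_def restr_in allp_def)
  qed
qed

end

theorem lemma3p11:
  fixes A :: "'a cset"
  assumes "normal_uniform_kan A"
  shows "\<exists>c. is_connection A c \<and> normal_connection A c"
proof -
  obtain \<phi> where "uniform_kan A \<phi>" and "normal_kan A \<phi>"
    using assms unfolding normal_uniform_kan_def by blast
  then have "is_connection A (conn \<phi>)" and "normal_connection A (conn \<phi>)"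
    by (simp_all add: is_connection_conn normal_connection_conn)
  then show ?thesis
    by blast
qed

end
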